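(* Let $G$ be a graph and let $K$ be a clique of $G$ that is a block of $G$ and contains exactly one cut-vertex $c$ of $G$. Let $G_K$ be the graph obtained from $G$ by deleting all vertices of $K$ other than $c$. Then $p(G)=p(G_K)$.
   Context: All graphs are finite and simple. For an acyclic digraph $D$, the phylogeny graph $P(D)$ is the graph on $V(D)$ in which distinct vertices $u,v$ are adjacent if and only if $(u,v)\in A(D)$, or $(v,u)\in A(D)$, or there is a vertex $w$ with $(u,w),(v,w)\in A(D)$. A phylogeny digraph for a graph $G$ is an acyclic digraph $D$ such that $G$ is an induced subgraph of $P(D)$ and $D$ has no arc from a vertex of $V(D)\setminus V(G)$ to a vertex of $V(G)$. The phylogeny number $p(G)$ is the minimum of $|V(D)\setminus V(G)|$ over all phylogeny digraphs $D$ for $G$. *)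

theory Defs
  imports Main
begin

definition graph :: "'a set \<Rightarrow> ('a \<times> 'a) set \<Rightarrow> bool" where
  "graph V E \<longleftrightarrow> finite V \<and> E \<subseteq> V \<times> V \<and> sym E \<and> irrefl E"

definition induced_edges :: "('a \<times> 'a) set \<Rightarrow> 'a set \<Rightarrow> ('a \<times> 'a) set" where
  "induced_edges E S = E \<inter> (S \<times> S)"

definition reach :: "'a set \<Rightarrow> ('a \<times> 'a) set \<Rightarrow> ('a \<times> 'a) set" where
  "reach V E = ((E \<inter> (V \<times> V))\<^sup>*) \<inter> (V \<times> V)"

definition num_components :: "'a set \<Rightarrow> ('a \<times> 'a) set \<Rightarrow> nat" where
  "num_components V E = card (V // reach V E)"

definition connected_graph :: "'a set \<Rightarrow> ('a \<times> 'a) set \<Rightarrow> bool" where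
  "connected_graph V E \<longleftrightarrow> V \<noteq> {} \<and> (\<forall>u\<in>V. \<forall>v\<in>V. (u, v) \<in> reach V E)"

definition cut_vertex :: "'a set \<Rightarrow> ('a \<times> 'a) set \<Rightarrow> 'a \<Rightarrow> bool" where
  "cut_vertex V E v \<longleftrightarrow> v \<in> V \<and>
     num_components (V - {v}) (induced_edges E (V - {v})) > num_components V E"

definition clique :: "'a set \<Rightarrow> ('a \<times> 'a) set \<Rightarrow> 'a set \<Rightarrow> bool" where
  "clique V E K \<longleftrightarrow> K \<subseteq> V \<and> (\<forall>u\<in>K. \<forall>v\<in>K. u \<noteq> v \<longrightarrow> (u, v) \<in> E)"

definition nonsep :: "'a set \<Rightarrow> ('a \<times> 'a) set \<Rightarrow> 'a set \<Rightarrow> bool" where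
  "nonsep V E B \<longleftrightarrow> B \<subseteq> V \<and> connected_graph B (induced_edges E B) \<and>
     (\<forall>v\<in>B. \<not> cut_vertex B (induced_edges E B) v)"

text \<open>A block: a maximal connected subgraph without a cut-vertex
  (maximal subgraphs with this property are induced, so we work with vertex sets).\<close>
definition is_block :: "'a set \<Rightarrow> ('a \<times> 'a) set \<Rightarrow> 'a set \<Rightarrow> bool" where
  "is_block V E B \<longleftrightarrow> nonsep V E B \<and> (\<forall>B'. B \<subset> B' \<and> B' \<subseteq> V \<longrightarrow> \<not> nonsep V E B')"

definition phylo_edges :: "('b \<times> 'b) set \<Rightarrow> ('b \<times> 'b) set" where
  "phylo_edges A = {(u, v). u \<noteq> v \<and> ((u, v) \<in> A \<or> (v, u) \<in> A \<or> (\<exists>w. (u, w) \<in> A \<and> (v, w) \<in> A))}"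

text \<open>A phylogeny digraph D = (W, A) for G = (V, E).  The vertices of D are of type
  'a + nat: the vertex x of G is Inl x, and the additional vertices are of the form Inr n.\<close>
definition phylogeny_digraph ::
  "'a set \<Rightarrow> ('a \<times> 'a) set \<Rightarrow> ('a + nat) set \<Rightarrow> (('a + nat) \<times> ('a + nat)) set \<Rightarrow> bool" where
  "phylogeny_digraph V E W A \<longleftrightarrow>
     finite W \<and> A \<subseteq> W \<times> W \<and> acyclic A \<and>
     Inl ` V \<subseteq> W \<and> W \<subseteq> Inl ` V \<union> range Inr \<and>
     (\<forall>u\<in>V. \<forall>v\<in>V. (u, v) \<in> E \<longleftrightarrow> (Inl u, Inl v) \<in> phylo_edges A) \<and>
     (\<forall>x\<in>W - Inl ` V. \<forall>y\<in>Inl ` V. (x, y) \<notin> A)"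

definition phylogeny_number :: "'a set \<Rightarrow> ('a \<times> 'a) set \<Rightarrow> nat" where
  "phylogeny_number V E =
     (LEAST k. \<exists>W A. phylogeny_digraph V E W A \<and> card (W - Inl ` V) = k)"

end

theory Submission
  imports Defs "HOL-Library.Transitive_Closure_Table"
begin

text \<open>A vertex w \<noteq> c of the block K that is not a cut-vertex has all its neighbours in K:
  a neighbour u outside K would still be joined to c in G - w, and K together with the part
  of such a path lying outside K would be a larger vertex set without cut-vertex.  So K - {c}
  is a clique attached to the rest of G only through c.  A phylogeny digraph of G restricts
  to one of G_K, since a vertex of K - {c} is a common out-neighbour only of vertices of K.
  Conversely, a phylogeny digraph of G_K extends to G by orienting K as a transitive
  tournament with source c: this needs no new vertices, and since the added vertices receive
  arcs only from K it creates no edges among the old ones.\<close>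

section \<open>Connectivity\<close>

lemma reach_induced_edges: "reach S (induced_edges E S) = (E \<inter> S \<times> S)\<^sup>* \<inter> S \<times> S"
  unfolding reach_def induced_edges_def by (simp add: Int_assoc)

lemma induced_edges_induced_edges: "T \<subseteq> S \<Longrightarrow> induced_edges (induced_edges E S) T = induced_edges E T"
  unfolding induced_edges_def by blast

lemma reach_induced_edges_subset:
  assumes "T \<subseteq> S"
  shows "reach T (induced_edges E T) \<subseteq> reach S E"
proof -
  have "(E \<inter> T \<times> T)\<^sup>* \<subseteq> (E \<inter> S \<times> S)\<^sup>*" using assms by (intro rtrancl_mono) blast
  moreover have "T \<times> T \<subseteq> S \<times> S" using assms by blast
  ultimately show ?thesis unfolding reach_induced_edges unfolding reach_def by (rule Int_mono)
qed

lemma rtrancl_Int_Times_sym: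
  assumes "sym E" "(a, b) \<in> (E \<inter> T \<times> T)\<^sup>*"
  shows "(b, a) \<in> (E \<inter> T \<times> T)\<^sup>*"
proof -
  have "sym (E \<inter> T \<times> T)" using assms(1) unfolding sym_def by blast
  then show ?thesis using assms(2) sym_rtrancl unfolding sym_def by blast
qed

lemma rtrancl_Int_Times_mem_iff: "(a, b) \<in> (E \<inter> T \<times> T)\<^sup>* \<Longrightarrow> a \<in> T \<longleftrightarrow> b \<in> T"
  by (induction rule: rtrancl_induct) auto

lemma sym_induced_edges: "sym E \<Longrightarrow> sym (induced_edges E S)"
  unfolding induced_edges_def sym_def by blast

lemma equiv_reach:
  assumes "sym E"
  shows "equiv S (reach S E)"
proof (rule equivI)
  show "reach S E \<subseteq> S \<times> S" unfolding reach_def by blast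
  show "refl_on S (reach S E)" unfolding reach_def refl_on_def by blast
  show "sym (reach S E)"
    using rtrancl_Int_Times_sym[OF assms] unfolding reach_def sym_def by blast
  show "trans (reach S E)"
    unfolding reach_def trans_def by (blast intro: rtrancl_trans)
qed

lemma num_components_connected:
  assumes "connected_graph S E"
  shows "num_components S E = 1"
proof -
  have "\<And>x. x \<in> S \<Longrightarrow> reach S E `` {x} = S"
    using assms unfolding connected_graph_def reach_def by blast
  then have "S // reach S E = {S}"
    using assms unfolding connected_graph_def quotient_def by blast
  then show ?thesis unfolding num_components_def by simp
qed

lemma not_cut_vertex_if_connected:
  assumes "connected_graph S E" "connected_graph (S - {v}) (induced_edges E (S - {v}))"
  shows "\<not> cut_vertex S E v"
proof -
  have "num_components S E = 1" "num_components (S - {v}) (induced_edges E (S - {v})) = 1"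
    using assms num_components_connected by blast+
  then show ?thesis unfolding cut_vertex_def by simp
qed

lemma connected_graph_if_reaches_clique:
  assumes "sym E" "C \<subseteq> T" "C \<noteq> {}" "\<forall>x\<in>C. \<forall>y\<in>C. x \<noteq> y \<longrightarrow> (x, y) \<in> E"
    and reaches: "\<forall>p\<in>T. \<exists>q\<in>C. (p, q) \<in> (E \<inter> T \<times> T)\<^sup>*"
  shows "connected_graph T (induced_edges E T)"
proof -
  have "(p, p') \<in> (E \<inter> T \<times> T)\<^sup>*" if "p \<in> T" "p' \<in> T" for p p'
  proof -
    obtain q where "q \<in> C" and pq: "(p, q) \<in> (E \<inter> T \<times> T)\<^sup>*"
      using reaches \<open>p \<in> T\<close> by blast
    obtain q' where "q' \<in> C" and p'q': "(p', q') \<in> (E \<inter> T \<times> T)\<^sup>*"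
      using reaches \<open>p' \<in> T\<close> by blast
    have "(q, q') \<in> (E \<inter> T \<times> T)\<^sup>*"
    proof (cases "q = q'")
      case False
      then have "(q, q') \<in> E \<inter> T \<times> T" using assms(2,4) \<open>q \<in> C\<close> \<open>q' \<in> C\<close> by blast
      then show ?thesis by (rule r_into_rtrancl)
    qed simp
    with pq have "(p, q') \<in> (E \<inter> T \<times> T)\<^sup>*" by (rule rtrancl_trans)
    then show ?thesis using rtrancl_Int_Times_sym[OF assms(1) p'q'] by (rule rtrancl_trans)
  qed
  moreover have "T \<noteq> {}" using assms(2,3) by blast
  ultimately show ?thesis unfolding connected_graph_def reach_induced_edges by blast
qed

lemma Image_reach_induced_edges:
  assumes "sym E" "T \<subseteq> S" "y \<in> T"
  shows "reach S E `` (reach T (induced_edges E T) `` {y}) = reach S E `` {y}"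
proof
  have "trans (reach S E)" using equiv_reach[OF assms(1)] by (simp add: equiv_def)
  moreover have "reach T (induced_edges E T) \<subseteq> reach S E"
    using assms(2) by (rule reach_induced_edges_subset)
  ultimately show "reach S E `` (reach T (induced_edges E T) `` {y}) \<subseteq> reach S E `` {y}"
    unfolding trans_def by blast
  have "(y, y) \<in> reach T (induced_edges E T)" using assms(3) unfolding reach_def by blast
  then show "reach S E `` {y} \<subseteq> reach S E `` (reach T (induced_edges E T) `` {y})" by blast
qed

text \<open>Each component of G is the image of a component of G - w; the component of w is hit
  through its neighbour x.\<close>
lemma reach_Image_quotient_delete:
  assumes "sym E" "w \<in> V" "(w, x) \<in> E" "x \<in> V - {w}"
  defines "R \<equiv> reach V E" and "R' \<equiv> reach (V - {w}) (induced_edges E (V - {w}))"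
  shows "(\<lambda>X. R `` X) ` ((V - {w}) // R') = V // R"
proof
  have Image_class: "R `` (R' `` {y}) = R `` {y}" if "y \<in> V - {w}" for y
    unfolding R_def R'_def using Image_reach_induced_edges[OF assms(1) _ that] by blast
  show "(\<lambda>X. R `` X) ` ((V - {w}) // R') \<subseteq> V // R"
  proof (rule image_subsetI)
    fix X assume "X \<in> (V - {w}) // R'"
    then obtain y where "y \<in> V - {w}" "X = R' `` {y}" by (rule quotientE)
    then show "R `` X \<in> V // R" using Image_class by (auto intro: quotientI)
  qed
  show "V // R \<subseteq> (\<lambda>X. R `` X) ` ((V - {w}) // R')"
  proof
    fix Y assume "Y \<in> V // R"
    then obtain y where "y \<in> V" "Y = R `` {y}" by (rule quotientE)
    have "(w, x) \<in> R" using assms(2-4) unfolding R_def reach_def by blast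
    then have "R `` {w} = R `` {x}"
      unfolding R_def by (rule equiv_class_eq[OF equiv_reach[OF assms(1)]])
    then obtain y' where "y' \<in> V - {w}" "Y = R `` {y'}"
      using \<open>y \<in> V\<close> \<open>Y = R `` {y}\<close> assms(4) by (cases "y = w") auto
    then show "Y \<in> (\<lambda>X. R `` X) ` ((V - {w}) // R')"
      using Image_class by (auto intro: quotientI)
  qed
qed

lemma reach_delete_vertex_if_not_cut_vertex:
  assumes "finite V" "sym E" "w \<in> V" "\<not> cut_vertex V E w" "(w, x) \<in> E" "x \<in> V - {w}"
    and u: "u \<in> V - {w}" and v: "v \<in> V - {w}" and uv: "(u, v) \<in> reach V E"
  shows "(u, v) \<in> reach (V - {w}) (induced_edges E (V - {w}))"
proof (rule ccontr)
  define R R' where "R = reach V E" and "R' = reach (V - {w}) (induced_edges E (V - {w}))"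
  define Q where "Q = (V - {w}) // R'"
  assume "(u, v) \<notin> R'"
  have "equiv (V - {w}) R'" unfolding R'_def using equiv_reach assms(2) sym_induced_edges by blast
  have "R' `` {u} \<noteq> R' `` {v}"
    using eq_equiv_class_iff[OF \<open>equiv (V - {w}) R'\<close> u v] \<open>(u, v) \<notin> R'\<close> by blast
  moreover have "R `` {u} = R `` {v}"
    unfolding R_def by (rule equiv_class_eq[OF equiv_reach[OF assms(2)] uv])
  then have "R `` (R' `` {u}) = R `` (R' `` {v})"
    using Image_reach_induced_edges[OF assms(2), of "V - {w}" V] u v unfolding R_def R'_def by simp
  ultimately have "\<not> inj_on (\<lambda>X. R `` X) Q"
    using u v unfolding inj_on_def Q_def by (meson quotientI)
  moreover have "finite Q"
    using \<open>equiv (V - {w}) R'\<close> assms(1) unfolding Q_def by (simp add: finite_quotient equiv_def)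
  ultimately have "card ((\<lambda>X. R `` X) ` Q) < card Q"
    using card_image_le inj_on_iff_eq_card le_neq_implies_less by blast
  then have "card (V // R) < card Q"
    using reach_Image_quotient_delete[OF assms(2,3,5,6)] unfolding Q_def R_def R'_def by simp
  then show False
    using assms(3,4) unfolding cut_vertex_def num_components_def Q_def R_def R'_def by simp
qed

lemma rtrancl_imp_rtrancl_path: "(x, z) \<in> R\<^sup>* \<Longrightarrow> \<exists>xs. rtrancl_path (\<lambda>a b. (a, b) \<in> R) x xs z"
  by (induction rule: converse_rtrancl_induct) (auto intro: rtrancl_path.intros)

lemma rtrancl_path_last_mem: "rtrancl_path R x xs z \<Longrightarrow> z \<in> set (x # xs)"
  by (induction rule: rtrancl_path.induct) auto

lemma rtrancl_path_set_subset:
  "rtrancl_path (\<lambda>a b. (a, b) \<in> R) x xs z \<Longrightarrow> R \<subseteq> S \<times> S \<Longrightarrow> x \<in> S \<Longrightarrow> set (x # xs) \<subseteq> S"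
  by (induction rule: rtrancl_path.induct) auto

lemma rtrancl_path_within:
  assumes "rtrancl_path (\<lambda>a b. (a, b) \<in> E) x xs z" "set (x # xs) \<subseteq> T" "p \<in> set (x # xs)"
  shows "(x, p) \<in> (E \<inter> T \<times> T)\<^sup>* \<and> (p, z) \<in> (E \<inter> T \<times> T)\<^sup>*"
  using assms
proof (induction arbitrary: p rule: rtrancl_path.induct)
  case (step x y ys z)
  then have "(x, y) \<in> E \<inter> T \<times> T" by auto
  with step show ?case by (cases "p = x") (auto intro: converse_rtrancl_into_rtrancl)
qed simp

lemma rtrancl_path_delete_vertex:
  assumes "rtrancl_path (\<lambda>a b. (a, b) \<in> E) x xs z" "distinct (x # xs)"
    "set (x # xs) - {v} \<subseteq> T" "p \<in> set (x # xs)" "p \<in> T"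
  shows "(x, p) \<in> (E \<inter> T \<times> T)\<^sup>* \<or> (p, z) \<in> (E \<inter> T \<times> T)\<^sup>*"
  using assms
proof (induction arbitrary: p rule: rtrancl_path.induct)
  case (step x y ys z)
  show ?case
  proof (cases "p = x")
    case False
    then have IH: "(y, p) \<in> (E \<inter> T \<times> T)\<^sup>* \<or> (p, z) \<in> (E \<inter> T \<times> T)\<^sup>*"
      using step by (intro step.IH) auto
    show ?thesis
    proof (cases "x \<in> T")
      case True
      then show ?thesis using IH step rtrancl_Int_Times_mem_iff
        by (metis IntI mem_Sigma_iff converse_rtrancl_into_rtrancl)
    next
      case False
      then have "set (y # ys) \<subseteq> T" using step.prems by auto
      then show ?thesis
        using rtrancl_path_within[OF step.hyps(2)] \<open>p \<noteq> x\<close> step.prems(3) by auto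
    qed
  qed simp
qed simp

lemma rtrancl_exit:
  assumes "(x, y) \<in> R\<^sup>*" "x \<notin> K" "y \<in> K"
  shows "\<exists>z b. (x, z) \<in> (R \<inter> (- K) \<times> (- K))\<^sup>* \<and> z \<notin> K \<and> b \<in> K \<and> (z, b) \<in> R"
  using assms
proof (induction rule: converse_rtrancl_induct)
  case (step x x')
  then show ?case
    by (cases "x' \<in> K") (blast, auto intro: converse_rtrancl_into_rtrancl)
qed simp

lemma rtrancl_exit_path:
  assumes "(x, y) \<in> (E \<inter> U \<times> U)\<^sup>*" "x \<in> U" "x \<notin> K" "y \<in> K"
  obtains xs z b where "rtrancl_path (\<lambda>a b. (a, b) \<in> E) x xs z" "distinct (x # xs)"
    "set (x # xs) \<subseteq> U - K" "b \<in> K \<inter> U" "(z, b) \<in> E"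
proof -
  define R where "R = E \<inter> U \<times> U \<inter> (- K) \<times> (- K)"
  obtain z b where "(x, z) \<in> R\<^sup>*" and "b \<in> K" and zb: "(z, b) \<in> E \<inter> U \<times> U"
    using rtrancl_exit[OF assms(1,3,4)] unfolding R_def by blast
  obtain xs' where "rtrancl_path (\<lambda>a b. (a, b) \<in> R) x xs' z"
    using rtrancl_imp_rtrancl_path[OF \<open>(x, z) \<in> R\<^sup>*\<close>] by blast
  then obtain xs where path: "rtrancl_path (\<lambda>a b. (a, b) \<in> R) x xs z" and "distinct (x # xs)"
    by (rule rtrancl_path_distinct)
  have "set (x # xs) \<subseteq> U - K"
    using rtrancl_path_set_subset[OF path, of "U - K"] assms(2,3) unfolding R_def by blast
  moreover have "rtrancl_path (\<lambda>a b. (a, b) \<in> E) x xs z"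
    using path by (rule rtrancl_path_mono) (simp add: R_def)
  ultimately show ?thesis using that \<open>distinct (x # xs)\<close> \<open>b \<in> K\<close> zb by blast
qed

section \<open>Blocks that are cliques\<close>

lemma clique_Un_path_reaches_clique:
  assumes symE: "sym E" and K: "w \<in> K" "b \<in> K" "w \<noteq> b"
    and path: "rtrancl_path (\<lambda>x y. (x, y) \<in> E) u xs z" "distinct (u # xs)"
    and PK: "set (u # xs) \<inter> K = {}" and ends: "(w, u) \<in> E" "(z, b) \<in> E"
    and T: "K \<union> set (u # xs) - {v} \<subseteq> T" "T \<subseteq> K \<union> set (u # xs)" and p: "p \<in> T"
  shows "\<exists>q\<in>K \<inter> T. (p, q) \<in> (E \<inter> T \<times> T)\<^sup>*"
proof (cases "p \<in> K")
  case False
  define P where "P = set (u # xs)"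
  have "p \<in> P" using T p False unfolding P_def by auto
  have via_w: "(p, w) \<in> (E \<inter> T \<times> T)\<^sup>*" if "(u, p) \<in> (E \<inter> T \<times> T)\<^sup>*" "w \<in> T"
  proof -
    have "u \<in> T" using rtrancl_Int_Times_mem_iff[OF that(1)] p by blast
    then have "(u, w) \<in> E \<inter> T \<times> T" using ends(1) symE \<open>w \<in> T\<close> unfolding sym_def by blast
    then show ?thesis by (rule rtrancl_into_rtrancl[OF rtrancl_Int_Times_sym[OF symE that(1)]])
  qed
  have via_b: "(p, b) \<in> (E \<inter> T \<times> T)\<^sup>*" if "(p, z) \<in> (E \<inter> T \<times> T)\<^sup>*" "b \<in> T"
  proof -
    have "z \<in> T" using rtrancl_Int_Times_mem_iff[OF that(1)] p by blast
    then have "(z, b) \<in> E \<inter> T \<times> T" using ends(2) \<open>b \<in> T\<close> by blast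
    then show ?thesis by (rule rtrancl_into_rtrancl[OF that(1)])
  qed
  have split: "(u, p) \<in> (E \<inter> T \<times> T)\<^sup>* \<or> (p, z) \<in> (E \<inter> T \<times> T)\<^sup>*"
    using rtrancl_path_delete_vertex[OF path, of v T p] T p \<open>p \<in> P\<close> unfolding P_def by blast
  show ?thesis
  proof (cases "w \<in> T \<and> b \<in> T")
    case True
    then show ?thesis using split via_w via_b K(1,2) by blast
  next
    case False
    then have "P \<subseteq> T" using T K PK unfolding P_def by blast
    then have "(u, p) \<in> (E \<inter> T \<times> T)\<^sup>* \<and> (p, z) \<in> (E \<inter> T \<times> T)\<^sup>*"
      using rtrancl_path_within[OF path(1), of T p] \<open>p \<in> P\<close> unfolding P_def by blast
    moreover have "w \<in> T \<or> b \<in> T" using T K by blast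
    ultimately show ?thesis using via_w via_b K(1,2) by blast
  qed
next
  case True
  then show ?thesis using p by blast
qed

text \<open>Deleting any vertex leaves every remaining vertex joined to what remains of the clique.\<close>
lemma nonsep_clique_Un_path:
  assumes symE: "sym E" and clq: "clique V E K" and K: "w \<in> K" "b \<in> K" "w \<noteq> b"
    and path: "rtrancl_path (\<lambda>x y. (x, y) \<in> E) u xs z" "distinct (u # xs)"
    and PV: "set (u # xs) \<subseteq> V - K" and ends: "(w, u) \<in> E" "(z, b) \<in> E"
  shows "nonsep V E (K \<union> set (u # xs))"
proof -
  define H where "H = K \<union> set (u # xs)"
  have K_adj: "\<forall>x\<in>K. \<forall>y\<in>K. x \<noteq> y \<longrightarrow> (x, y) \<in> E" and "K \<subseteq> V"
    using clq unfolding clique_def by auto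
  have "set (u # xs) \<inter> K = {}" using PV by blast
  note reaches = clique_Un_path_reaches_clique[OF symE K path this ends, folded H_def]
  have connected: "connected_graph T (induced_edges E T)" if "H - {v} \<subseteq> T" "T \<subseteq> H" for T v
  proof (rule connected_graph_if_reaches_clique[OF symE])
    show "K \<inter> T \<subseteq> T" "K \<inter> T \<noteq> {}" using that K unfolding H_def by blast+
    show "\<forall>x\<in>K \<inter> T. \<forall>y\<in>K \<inter> T. x \<noteq> y \<longrightarrow> (x, y) \<in> E" using K_adj by blast
    show "\<forall>p\<in>T. \<exists>q\<in>K \<inter> T. (p, q) \<in> (E \<inter> T \<times> T)\<^sup>*" using reaches that by blast
  qed
  have "H \<subseteq> V" using PV \<open>K \<subseteq> V\<close> unfolding H_def by blast
  moreover have "connected_graph H (induced_edges E H)" by (rule connected[where v = w]) auto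
  moreover have "\<not> cut_vertex H (induced_edges E H) v" if "v \<in> H" for v
  proof (rule not_cut_vertex_if_connected)
    show "connected_graph H (induced_edges E H)" by (rule connected[where v = w]) auto
    have "connected_graph (H - {v}) (induced_edges E (H - {v}))" by (rule connected) auto
    then show "connected_graph (H - {v}) (induced_edges (induced_edges E H) (H - {v}))"
      by (simp add: induced_edges_induced_edges Diff_subset)
  qed
  ultimately show ?thesis unfolding nonsep_def H_def by blast
qed

lemma neighbour_mem_block_clique:
  assumes G: "graph V E" and clq: "clique V E K" and blk: "is_block V E K"
    and K: "c \<in> K" "w \<in> K" "w \<noteq> c" and ncut: "\<not> cut_vertex V E w" and wu: "(w, u) \<in> E"
  shows "u \<in> K"
proof (rule ccontr)
  assume "u \<notin> K"
  have "finite V" "sym E" "E \<subseteq> V \<times> V" using G unfolding graph_def by auto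
  have "K \<subseteq> V" "(w, c) \<in> E" using clq K unfolding clique_def by auto
  define V' where "V' = V - {w}"
  have "u \<in> V'" "c \<in> V'" "w \<in> V"
    using wu \<open>E \<subseteq> V \<times> V\<close> \<open>u \<notin> K\<close> K \<open>K \<subseteq> V\<close> unfolding V'_def by auto
  have "(u, w) \<in> E \<inter> V \<times> V" "(w, c) \<in> E \<inter> V \<times> V"
    using wu \<open>(w, c) \<in> E\<close> \<open>sym E\<close> \<open>E \<subseteq> V \<times> V\<close> unfolding sym_def by blast+
  then have "(u, c) \<in> (E \<inter> V \<times> V)\<^sup>*" by (rule rtrancl_into_rtrancl[OF r_into_rtrancl])
  then have "(u, c) \<in> reach V E" using \<open>u \<in> V'\<close> \<open>c \<in> V'\<close> unfolding reach_def V'_def by blast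
  with \<open>u \<in> V'\<close> \<open>c \<in> V'\<close> have "(u, c) \<in> reach V' (induced_edges E V')"
    unfolding V'_def
    by (intro reach_delete_vertex_if_not_cut_vertex[OF \<open>finite V\<close> \<open>sym E\<close> \<open>w \<in> V\<close> ncut wu])
  then have "(u, c) \<in> (E \<inter> V' \<times> V')\<^sup>*" unfolding reach_induced_edges by blast
  then obtain xs z b where path: "rtrancl_path (\<lambda>x y. (x, y) \<in> E) u xs z" "distinct (u # xs)"
    and "set (u # xs) \<subseteq> V' - K" "b \<in> K \<inter> V'" "(z, b) \<in> E"
    using \<open>u \<in> V'\<close> \<open>u \<notin> K\<close> K(1) by (rule rtrancl_exit_path)
  then have "b \<in> K" "w \<noteq> b" "set (u # xs) \<subseteq> V - K" unfolding V'_def by auto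
  then have "nonsep V E (K \<union> set (u # xs))"
    by (rule nonsep_clique_Un_path[OF \<open>sym E\<close> clq K(2) _ _ path _ wu \<open>(z, b) \<in> E\<close>])
  moreover have "K \<subset> K \<union> set (u # xs)" "K \<union> set (u # xs) \<subseteq> V"
    using \<open>u \<notin> K\<close> \<open>K \<subseteq> V\<close> \<open>set (u # xs) \<subseteq> V - K\<close> by auto
  ultimately show False using blk unfolding is_block_def by blast
qed

section \<open>Phylogeny digraphs\<close>

lemma mem_phylo_edges:
  "(u, v) \<in> phylo_edges A \<longleftrightarrow> u \<noteq> v \<and> ((u, v) \<in> A \<or> (v, u) \<in> A \<or> (\<exists>w. (u, w) \<in> A \<and> (v, w) \<in> A))"
  unfolding phylo_edges_def by simp

lemma phylo_edges_sym: "(a, b) \<in> phylo_edges A \<Longrightarrow> (b, a) \<in> phylo_edges A"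
  unfolding phylo_edges_def by blast

lemma phylo_edges_mono: "A \<subseteq> A' \<Longrightarrow> phylo_edges A \<subseteq> phylo_edges A'"
  unfolding phylo_edges_def by blast

lemma phylogeny_digraph_Inl_Field:
  assumes "phylogeny_digraph V E W A" "Inl x \<in> Field A"
  shows "x \<in> V"
proof -
  have "Field A \<subseteq> W" "W \<subseteq> Inl ` V \<union> range Inr"
    using assms(1) unfolding phylogeny_digraph_def Field_def by blast+
  then show ?thesis using assms(2) by blast
qed

text \<open>A deleted common out-neighbour in S could only witness an edge between two distinct
  vertices outside S, which the hypothesis excludes.\<close>
lemma phylogeny_digraph_delete:
  assumes pd: "phylogeny_digraph V E W A" and "S \<subseteq> V"
    and single: "\<And>s u v. s \<in> S \<Longrightarrow> u \<in> V - S \<Longrightarrow> v \<in> V - S \<Longrightarrow> (u, s) \<in> E \<Longrightarrow> (v, s) \<in> E \<Longrightarrow> u = v"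
  shows "phylogeny_digraph (V - S) (induced_edges E (V - S))
           (W - Inl ` S) (A \<inter> (W - Inl ` S) \<times> (W - Inl ` S))"
proof -
  define W' A' where "W' = W - Inl ` S" and "A' = A \<inter> W' \<times> W'"
  have "finite W" "A \<subseteq> W \<times> W" "acyclic A" "Inl ` V \<subseteq> W" "W \<subseteq> Inl ` V \<union> range Inr"
    and edges: "\<forall>u\<in>V. \<forall>v\<in>V. (u, v) \<in> E \<longleftrightarrow> (Inl u, Inl v) \<in> phylo_edges A"
    and no_arc_in: "\<forall>x\<in>W - Inl ` V. \<forall>y\<in>Inl ` V. (x, y) \<notin> A"
    using pd unfolding phylogeny_digraph_def by auto
  have "(Inl u, Inl v) \<in> phylo_edges A'" if uv: "u \<in> V - S" "v \<in> V - S"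
    and "(Inl u, Inl v) \<in> phylo_edges A" for u v
  proof -
    have "u \<noteq> v" "Inl u \<in> W'" "Inl v \<in> W'"
      using that \<open>Inl ` V \<subseteq> W\<close> unfolding phylo_edges_def W'_def by auto
    have "x \<in> W'" if arcs: "(Inl u, x) \<in> A" "(Inl v, x) \<in> A" for x
    proof (rule ccontr)
      assume "x \<notin> W'"
      then obtain s where "s \<in> S" "x = Inl s" using arcs \<open>A \<subseteq> W \<times> W\<close> unfolding W'_def by blast
      then have "(u, s) \<in> E" "(v, s) \<in> E"
        using arcs edges uv \<open>S \<subseteq> V\<close> unfolding phylo_edges_def by auto
      then show False using single \<open>s \<in> S\<close> uv \<open>u \<noteq> v\<close> by blast
    qed
    then show ?thesis
      using \<open>(Inl u, Inl v) \<in> phylo_edges A\<close> \<open>Inl u \<in> W'\<close> \<open>Inl v \<in> W'\<close>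
      unfolding phylo_edges_def A'_def by blast
  qed
  moreover have "phylo_edges A' \<subseteq> phylo_edges A" unfolding A'_def by (rule phylo_edges_mono) blast
  ultimately have edges': "\<forall>u\<in>V - S. \<forall>v\<in>V - S. (u, v) \<in> induced_edges E (V - S) \<longleftrightarrow> (Inl u, Inl v) \<in> phylo_edges A'"
    using edges unfolding induced_edges_def by blast
  have extra: "W' - Inl ` (V - S) = W - Inl ` V" using \<open>S \<subseteq> V\<close> unfolding W'_def by auto
  show ?thesis
    unfolding phylogeny_digraph_def W'_def[symmetric] A'_def[symmetric]
  proof (intro conjI)
    show "finite W'" using \<open>finite W\<close> unfolding W'_def by simp
    show "A' \<subseteq> W' \<times> W'" unfolding A'_def by blast
    show "acyclic A'" using \<open>acyclic A\<close> unfolding A'_def by (rule acyclic_subset) blast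
    show "Inl ` (V - S) \<subseteq> W'" using \<open>Inl ` V \<subseteq> W\<close> unfolding W'_def by auto
    show "W' \<subseteq> Inl ` (V - S) \<union> range Inr" using \<open>W \<subseteq> Inl ` V \<union> range Inr\<close> unfolding W'_def by force
  qed (use edges' no_arc_in extra in \<open>auto simp: A'_def\<close>)
qed

text \<open>A cycle through a B-arc enters N, and from N only B-arcs, increasing r, leave.\<close>
lemma acyclic_Un_ranked:
  fixes r :: "'a \<Rightarrow> 'b::order"
  assumes "acyclic A" "N \<inter> Field A = {}" "Range B \<subseteq> N"
    and rank: "\<And>x y. (x, y) \<in> B \<Longrightarrow> x \<in> N \<Longrightarrow> r x < r y"
  shows "acyclic (A \<union> B)"
proof -
  have "(x, y) \<in> A\<^sup>+ \<or> (y \<in> N \<and> (x \<in> N \<longrightarrow> r x < r y))" if "(x, y) \<in> (A \<union> B)\<^sup>+" for x y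
    using that
  proof (induction rule: trancl_induct)
    case (base y)
    show ?case
    proof (cases "(x, y) \<in> A")
      case True
      then have "(x, y) \<in> A\<^sup>+" by (rule r_into_trancl')
      then show ?thesis by (rule disjI1)
    next
      case False
      then have "(x, y) \<in> B" using base by blast
      then show ?thesis using assms(3) rank by (intro disjI2) blast
    qed
  next
    case (step y z)
    from step.IH show ?case
    proof
      assume "(x, y) \<in> A\<^sup>+"
      then have "x \<notin> N" using assms(2) trancl_domain[of A] unfolding Field_def by blast
      show ?case
      proof (cases "(y, z) \<in> A")
        case True
        with \<open>(x, y) \<in> A\<^sup>+\<close> have "(x, z) \<in> A\<^sup>+" by (rule trancl_into_trancl)
        then show ?thesis by (rule disjI1)
      next
        case False
        then show ?thesis using step.hyps(2) assms(3) \<open>x \<notin> N\<close> by (intro disjI2) blast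
      qed
    next
      assume y: "y \<in> N \<and> (x \<in> N \<longrightarrow> r x < r y)"
      then have "(y, z) \<in> B" using step.hyps(2) assms(2) unfolding Field_def by blast
      then have "z \<in> N" "r y < r z" using assms(3) rank y by blast+
      then show ?case using y order.strict_trans by blast
    qed
  qed
  then show ?thesis using assms(1) unfolding acyclic_def by blast
qed

text \<open>The clique insert c S oriented transitively, with source c and S ranked by f.  All arcs
  end in Inl ` S, so they create no edges among the other vertices.\<close>
definition tournament_arcs :: "'a \<Rightarrow> 'a set \<Rightarrow> ('a \<Rightarrow> nat) \<Rightarrow> (('a + 'b) \<times> ('a + 'b)) set" where
  "tournament_arcs c S f =
     {(Inl c, Inl s) | s. s \<in> S} \<union> {(Inl s, Inl t) | s t. s \<in> S \<and> t \<in> S \<and> f s < f t}"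

lemma tournament_arcsD:
  "(x, y) \<in> tournament_arcs c S f \<Longrightarrow> x \<in> Inl ` insert c S \<and> y \<in> Inl ` S"
  unfolding tournament_arcs_def by auto

lemma phylo_edges_Un_tournament_arcs_outside:
  assumes "Inl ` S \<inter> Field A = {}" "x \<notin> Inl ` S" "y \<notin> Inl ` S"
  shows "(x, y) \<in> phylo_edges (A \<union> tournament_arcs c S f) \<longleftrightarrow> (x, y) \<in> phylo_edges A"
proof
  let ?T = "tournament_arcs c S f"
  assume xy: "(x, y) \<in> phylo_edges (A \<union> ?T)"
  then have "x \<noteq> y" by (simp add: mem_phylo_edges)
  have "(x, t) \<in> A \<and> (y, t) \<in> A" if xt: "(x, t) \<in> A \<union> ?T" and yt: "(y, t) \<in> A \<union> ?T" for t
  proof (cases "t \<in> Inl ` S")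
    case True
    then have "(x, t) \<notin> A" "(y, t) \<notin> A" using assms(1) unfolding Field_def by blast+
    then have "(x, t) \<in> ?T" "(y, t) \<in> ?T" using xt yt by blast+
    then have "x = Inl c" "y = Inl c" using assms(2,3) by (auto simp: tournament_arcs_def)
    then show ?thesis using \<open>x \<noteq> y\<close> by simp
  next
    case False
    then show ?thesis using xt yt by (blast dest: tournament_arcsD)
  qed
  moreover have "(x, y) \<notin> ?T" "(y, x) \<notin> ?T" using assms(2,3) by (blast dest: tournament_arcsD)+
  ultimately show "(x, y) \<in> phylo_edges A" using xy \<open>x \<noteq> y\<close> unfolding mem_phylo_edges by auto
next
  assume "(x, y) \<in> phylo_edges A"
  then show "(x, y) \<in> phylo_edges (A \<union> tournament_arcs c S f)"
    using phylo_edges_mono[of A "A \<union> tournament_arcs c S f"] by auto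
qed

lemma phylo_edges_Un_tournament_arcs_inside:
  assumes "Inl ` S \<inter> Field A = {}" "inj_on f S" "s \<in> S"
  shows "(Inl s, y) \<in> phylo_edges (A \<union> tournament_arcs c S f) \<longleftrightarrow> y \<in> Inl ` insert c S \<and> y \<noteq> Inl s"
proof
  let ?T = "tournament_arcs c S f"
  have out: "(Inl s, t) \<in> ?T" if "(Inl s, t) \<in> A \<union> ?T" for t
    using that assms(1,3) unfolding Field_def by blast
  have into: "(x, t) \<in> ?T" if "(x, t) \<in> A \<union> ?T" "t \<in> Inl ` S" for x t
    using that assms(1) unfolding Field_def by blast
  assume "(Inl s, y) \<in> phylo_edges (A \<union> ?T)"
  then have "y \<noteq> Inl s" and
    "(Inl s, y) \<in> A \<union> ?T \<or> (y, Inl s) \<in> A \<union> ?T \<or> (\<exists>t. (Inl s, t) \<in> A \<union> ?T \<and> (y, t) \<in> A \<union> ?T)"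
    unfolding mem_phylo_edges by blast+
  then show "y \<in> Inl ` insert c S \<and> y \<noteq> Inl s"
    using out into assms(3) by (blast dest: tournament_arcsD)
next
  assume y: "y \<in> Inl ` insert c S \<and> y \<noteq> Inl s"
  then consider "y = Inl c" | t where "t \<in> S" "y = Inl t" "f s \<noteq> f t"
    using assms(2,3) unfolding inj_on_def by blast
  then have "(y, Inl s) \<in> tournament_arcs c S f \<or> (Inl s, y) \<in> tournament_arcs c S f"
    by cases (use assms(3) in \<open>auto simp: tournament_arcs_def\<close>)
  then show "(Inl s, y) \<in> phylo_edges (A \<union> tournament_arcs c S f)"
    using y unfolding mem_phylo_edges by blast
qed

definition pendant_clique :: "'a set \<Rightarrow> ('a \<times> 'a) set \<Rightarrow> 'a set \<Rightarrow> 'a \<Rightarrow> bool" where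
  "pendant_clique V E S c \<longleftrightarrow>
     c \<in> V - S \<and> clique V E (insert c S) \<and> (\<forall>s\<in>S. \<forall>v\<in>V. (s, v) \<in> E \<longrightarrow> v \<in> insert c S)"

lemma pendant_clique_edge_iff:
  assumes "graph V E" "pendant_clique V E S c" "s \<in> S" "v \<in> V"
  shows "(s, v) \<in> E \<longleftrightarrow> v \<in> insert c S \<and> v \<noteq> s"
proof
  assume "(s, v) \<in> E"
  moreover have "(s, s) \<notin> E" using assms(1) unfolding graph_def irrefl_def by blast
  ultimately show "v \<in> insert c S \<and> v \<noteq> s" using assms(2-4) unfolding pendant_clique_def by blast
next
  assume v: "v \<in> insert c S \<and> v \<noteq> s"
  have "\<forall>x\<in>insert c S. \<forall>y\<in>insert c S. x \<noteq> y \<longrightarrow> (x, y) \<in> E"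
    using assms(2) unfolding pendant_clique_def clique_def by simp
  then show "(s, v) \<in> E" using v insertI2[OF assms(3)] by metis
qed

lemma phylo_edges_extend_iff:
  assumes G: "graph V E" and pend: "pendant_clique V E S c" and "inj_on f S"
    and pd: "phylogeny_digraph (V - S) (induced_edges E (V - S)) W A"
    and uv: "u \<in> V" "v \<in> V"
  shows "(u, v) \<in> E \<longleftrightarrow> (Inl u, Inl v) \<in> phylo_edges (A \<union> tournament_arcs c S f)"
proof -
  let ?A' = "A \<union> tournament_arcs c S f"
  have "sym E" using G unfolding graph_def by blast
  have fresh: "Inl ` S \<inter> Field A = {}" using phylogeny_digraph_Inl_Field[OF pd] by blast
  have E_iff: "(s, x) \<in> E \<longleftrightarrow> (Inl s, Inl x) \<in> phylo_edges ?A'" if "s \<in> S" "x \<in> V" for s x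
    using pendant_clique_edge_iff[OF G pend that]
      phylo_edges_Un_tournament_arcs_inside[OF fresh \<open>inj_on f S\<close> \<open>s \<in> S\<close>] by auto
  consider "u \<in> S" | "v \<in> S" | "u \<in> V - S" "v \<in> V - S" using uv by blast
  then show ?thesis
  proof cases
    case 1
    then show ?thesis by (rule E_iff[OF _ uv(2)])
  next
    case 2
    have "(u, v) \<in> E \<longleftrightarrow> (v, u) \<in> E" using \<open>sym E\<close> by (meson symD)
    also have "\<dots> \<longleftrightarrow> (Inl v, Inl u) \<in> phylo_edges ?A'" by (rule E_iff[OF 2 uv(1)])
    also have "\<dots> \<longleftrightarrow> (Inl u, Inl v) \<in> phylo_edges ?A'" by (meson phylo_edges_sym)
    finally show ?thesis .
  next
    case 3
    then have "Inl u \<notin> Inl ` S" "Inl v \<notin> Inl ` S" by auto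
    then have "(Inl u, Inl v) \<in> phylo_edges ?A' \<longleftrightarrow> (Inl u, Inl v) \<in> phylo_edges A"
      by (rule phylo_edges_Un_tournament_arcs_outside[OF fresh])
    then show ?thesis using pd 3 unfolding phylogeny_digraph_def induced_edges_def by auto
  qed
qed

lemma phylogeny_digraph_extend:
  assumes G: "graph V E" and pend: "pendant_clique V E S c" and "inj_on f S"
    and pd: "phylogeny_digraph (V - S) (induced_edges E (V - S)) W A"
  shows "phylogeny_digraph V E (W \<union> Inl ` S) (A \<union> tournament_arcs c S f)"
proof -
  define W' A' where "W' = W \<union> Inl ` S" and "A' = A \<union> tournament_arcs c S f"
  have "finite W" "A \<subseteq> W \<times> W" "acyclic A" "Inl ` (V - S) \<subseteq> W" and W: "W \<subseteq> Inl ` (V - S) \<union> range Inr"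
    and no_arc_in: "\<forall>x\<in>W - Inl ` (V - S). \<forall>y\<in>Inl ` (V - S). (x, y) \<notin> A"
    using pd unfolding phylogeny_digraph_def by auto
  have "S \<subseteq> V" "c \<in> V - S" "finite V"
    using pend G unfolding pendant_clique_def clique_def graph_def by auto
  have fresh: "Inl ` S \<inter> W = {}" using W by blast
  have "acyclic A'"
    unfolding A'_def
  proof (rule acyclic_Un_ranked[where r = "f \<circ> projl"])
    show "Inl ` S \<inter> Field A = {}" using phylogeny_digraph_Inl_Field[OF pd] by blast
    show "Range (tournament_arcs c S f) \<subseteq> Inl ` S" by (blast dest: tournament_arcsD)
    show "(f \<circ> projl) x < (f \<circ> projl) y" if "(x, y) \<in> tournament_arcs c S f" "x \<in> Inl ` S" for x y
      using that \<open>c \<in> V - S\<close> by (auto simp: tournament_arcs_def)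
  qed fact
  have no_arc_in': "(x, y) \<notin> A'" if "x \<in> W' - Inl ` V" "y \<in> Inl ` V" for x y
  proof
    assume "(x, y) \<in> A'"
    moreover have "(x, y) \<notin> tournament_arcs c S f"
      using that \<open>S \<subseteq> V\<close> \<open>c \<in> V - S\<close> unfolding W'_def by (blast dest: tournament_arcsD)
    moreover have "(x, y) \<notin> A"
      using that no_arc_in fresh \<open>A \<subseteq> W \<times> W\<close> unfolding W'_def by blast
    ultimately show False unfolding A'_def by blast
  qed
  have "finite S" using \<open>S \<subseteq> V\<close> \<open>finite V\<close> by (rule finite_subset)
  show ?thesis
    unfolding phylogeny_digraph_def W'_def[symmetric] A'_def[symmetric]
  proof (intro conjI ballI)
    show "finite W'" using \<open>finite W\<close> \<open>finite S\<close> unfolding W'_def by simp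
    show "A' \<subseteq> W' \<times> W'"
      using \<open>A \<subseteq> W \<times> W\<close> \<open>Inl ` (V - S) \<subseteq> W\<close> \<open>c \<in> V - S\<close>
      unfolding A'_def W'_def by (auto dest: tournament_arcsD)
    show "acyclic A'" by fact
    show "Inl ` V \<subseteq> W'" using \<open>Inl ` (V - S) \<subseteq> W\<close> unfolding W'_def by auto
    show "W' \<subseteq> Inl ` V \<union> range Inr" using W \<open>S \<subseteq> V\<close> unfolding W'_def by auto
    show "(u, v) \<in> E \<longleftrightarrow> (Inl u, Inl v) \<in> phylo_edges A'" if "u \<in> V" "v \<in> V" for u v
      unfolding A'_def using G pend \<open>inj_on f S\<close> pd that by (rule phylo_edges_extend_iff)
  qed (use no_arc_in' in blast)
qed

theorem phylogeny_number_delete_pendant_clique: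
  assumes G: "graph V E" and pend: "pendant_clique V E S c"
  shows "phylogeny_number V E = phylogeny_number (V - S) (induced_edges E (V - S))"
proof -
  have "S \<subseteq> V" "sym E" "finite V"
    using pend G unfolding pendant_clique_def clique_def graph_def by auto
  have single: "u = v" if "s \<in> S" "u \<in> V - S" "v \<in> V - S" "(u, s) \<in> E" "(v, s) \<in> E" for s u v
    using that pend \<open>sym E\<close> unfolding pendant_clique_def by (metis DiffD1 DiffD2 insertE symD)
  obtain f :: "'a \<Rightarrow> nat" where "inj_on f S"
    using finite_imp_inj_to_nat_seg finite_subset[OF \<open>S \<subseteq> V\<close> \<open>finite V\<close>] by metis
  have "(\<exists>W A. phylogeny_digraph V E W A \<and> card (W - Inl ` V) = k) \<longleftrightarrow>
        (\<exists>W A. phylogeny_digraph (V - S) (induced_edges E (V - S)) W A \<and> card (W - Inl ` (V - S)) = k)"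
    for k
  proof
    assume "\<exists>W A. phylogeny_digraph V E W A \<and> card (W - Inl ` V) = k"
    then obtain W A where pd: "phylogeny_digraph V E W A" and "card (W - Inl ` V) = k" by blast
    moreover have "W - Inl ` S - Inl ` (V - S) = W - Inl ` V" using \<open>S \<subseteq> V\<close> by auto
    moreover have "phylogeny_digraph (V - S) (induced_edges E (V - S))
        (W - Inl ` S) (A \<inter> (W - Inl ` S) \<times> (W - Inl ` S))"
      using pd \<open>S \<subseteq> V\<close> single by (rule phylogeny_digraph_delete)
    ultimately show "\<exists>W A. phylogeny_digraph (V - S) (induced_edges E (V - S)) W A \<and> card (W - Inl ` (V - S)) = k"
      by metis
  next
    assume "\<exists>W A. phylogeny_digraph (V - S) (induced_edges E (V - S)) W A \<and> card (W - Inl ` (V - S)) = k"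
    then obtain W A where pd: "phylogeny_digraph (V - S) (induced_edges E (V - S)) W A"
      and "card (W - Inl ` (V - S)) = k" by blast
    moreover have "W \<union> Inl ` S - Inl ` V = W - Inl ` (V - S)"
      using pd \<open>S \<subseteq> V\<close> unfolding phylogeny_digraph_def by auto
    ultimately show "\<exists>W A. phylogeny_digraph V E W A \<and> card (W - Inl ` V) = k"
      using phylogeny_digraph_extend[OF G pend \<open>inj_on f S\<close> pd] by metis
  qed
  then show ?thesis unfolding phylogeny_number_def by simp
qed

theorem mainTheorem5:
  fixes V :: "'a set" and E :: "('a \<times> 'a) set" and K :: "'a set" and c :: 'a
  assumes "graph V E"
    and "clique V E K"
    and "is_block V E K"
    and "c \<in> K"
    and "cut_vertex V E c"
    and "\<forall>v\<in>K. cut_vertex V E v \<longrightarrow> v = c"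
  shows "phylogeny_number V E =
         phylogeny_number (V - (K - {c})) (induced_edges E (V - (K - {c})))"
proof -
  have "K \<subseteq> V" using assms(2) unfolding clique_def by blast
  have "u \<in> K" if "w \<in> K - {c}" "u \<in> V" "(w, u) \<in> E" for w u
    using neighbour_mem_block_clique[OF assms(1-4)] assms(6) that by blast
  moreover have "insert c (K - {c}) = K" using assms(4) by (rule insert_Diff)
  ultimately have "pendant_clique V E (K - {c}) c"
    using assms(2,4) \<open>K \<subseteq> V\<close> unfolding pendant_clique_def by auto
  then show ?thesis by (rule phylogeny_number_delete_pendant_clique[OF assms(1)])
qed

end
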